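(* Let $G$ be a block graph on $n$ vertices, i.e. a connected finite simple graph every block of which (maximal connected subgraph without a cut-vertex) is a clique, and let $w:E(G)\to\mathbb{R}_{>0}$ be a positive edge-weighting. For each edge $e$ define $C_w(e)$ as the maximum of $w(C)=\sum_{f\in E(C)}w(f)$ over all cycles $C\subseteq G$ containing $e$ if $e$ lies on a cycle, and $C_w(e)=2w(e)$ if $e$ is a bridge. If $\sum_{e\in E(G)}\frac{w(e)}{C_w(e)}=\frac{n-1}{2}$, then for every clique block $K$ of $G$ with $|V(K)|\ge 4$, the restriction of $w$ to $E(K)$ is vertex-induced, i.e. there exists $a_K:V(K)\to\mathbb{R}_{\ge0}$ with $w(uv)=\frac{a_K(u)+a_K(v)}{2}$ for all $uv\in E(K)$.
   Context: A bridge is an edge lying on no cycle. *)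

theory Defs
  imports Complex_Main
begin

definition simple_graph :: "'a set \<Rightarrow> 'a set set \<Rightarrow> bool" where
  "simple_graph V E \<longleftrightarrow> finite V \<and>
     (\<forall>e\<in>E. \<exists>u v. e = {u, v} \<and> u \<noteq> v \<and> u \<in> V \<and> v \<in> V)"

definition graph_connected :: "'a set \<Rightarrow> 'a set set \<Rightarrow> bool" where
  "graph_connected V E \<longleftrightarrow> V \<noteq> {} \<and>
     (\<forall>x\<in>V. \<forall>y\<in>V. (\<lambda>a b. {a, b} \<in> E)\<^sup>*\<^sup>* x y)"

definition subgraph :: "'a set \<Rightarrow> 'a set set \<Rightarrow> 'a set \<Rightarrow> 'a set set \<Rightarrow> bool" where
  "subgraph VH EH V E \<longleftrightarrow> VH \<subseteq> V \<and> EH \<subseteq> E \<and> (\<forall>e\<in>EH. e \<subseteq> VH)"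

definition cut_vertex :: "'a set \<Rightarrow> 'a set set \<Rightarrow> 'a \<Rightarrow> bool" where
  "cut_vertex VH EH v \<longleftrightarrow> v \<in> VH \<and>
     (\<exists>x\<in>VH - {v}. \<exists>y\<in>VH - {v}.
        \<not> (\<lambda>a b. {a, b} \<in> {e\<in>EH. v \<notin> e})\<^sup>*\<^sup>* x y)"

definition connected_no_cut :: "'a set \<Rightarrow> 'a set set \<Rightarrow> bool" where
  "connected_no_cut VH EH \<longleftrightarrow> graph_connected VH EH \<and> (\<forall>v. \<not> cut_vertex VH EH v)"

definition is_block :: "'a set \<Rightarrow> 'a set set \<Rightarrow> 'a set \<Rightarrow> 'a set set \<Rightarrow> bool" where
  "is_block V E VB EB \<longleftrightarrow> subgraph VB EB V E \<and> connected_no_cut VB EB \<and>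
     (\<forall>VH EH. subgraph VH EH V E \<and> connected_no_cut VH EH \<and> VB \<subseteq> VH \<and> EB \<subseteq> EH
        \<longrightarrow> VH = VB \<and> EH = EB)"

definition is_clique :: "'a set \<Rightarrow> 'a set set \<Rightarrow> bool" where
  "is_clique VH EH \<longleftrightarrow> (\<forall>u\<in>VH. \<forall>v\<in>VH. u \<noteq> v \<longrightarrow> {u, v} \<in> EH)"

definition block_graph :: "'a set \<Rightarrow> 'a set set \<Rightarrow> bool" where
  "block_graph V E \<longleftrightarrow> simple_graph V E \<and> graph_connected V E \<and>
     (\<forall>VB EB. is_block V E VB EB \<longrightarrow> is_clique VB EB)"

definition cycle_edges :: "'a list \<Rightarrow> 'a set set" where
  "cycle_edges c = {{c ! i, c ! ((i + 1) mod length c)} | i. i < length c}"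

definition is_cycle :: "'a set \<Rightarrow> 'a set set \<Rightarrow> 'a list \<Rightarrow> bool" where
  "is_cycle V E c \<longleftrightarrow> length c \<ge> 3 \<and> distinct c \<and> set c \<subseteq> V \<and> cycle_edges c \<subseteq> E"

definition cycle_weight :: "('a set \<Rightarrow> real) \<Rightarrow> 'a list \<Rightarrow> real" where
  "cycle_weight w c = (\<Sum>f\<in>cycle_edges c. w f)"

definition Cw :: "'a set \<Rightarrow> 'a set set \<Rightarrow> ('a set \<Rightarrow> real) \<Rightarrow> 'a set \<Rightarrow> real" where
  "Cw V E w e = (if \<exists>c. is_cycle V E c \<and> e \<in> cycle_edges c
      then Max (cycle_weight w ` {c. is_cycle V E c \<and> e \<in> cycle_edges c})
      else 2 * w e)"

end

theory Submission
  imports Defs "HOL-Combinatorics.Multiset_Permutations"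
begin

text \<open>
  For an edge e on a cycle C we have C_w(e) \<ge> w(C), so along any cycle the ratios w(e)/C_w(e)
  sum to at most 1. Averaging over all Hamiltonian cycles of a clique S, which by symmetry pass
  equally often through every edge of S, shows that the ratios of the edges of S sum to at most
  (|S| - 1)/2, with equality only if every Hamiltonian cycle of S is a heaviest cycle through
  each of its edges. A bridge is a maximal clique with two vertices and contributes exactly 1/2.

  In a block graph the maximal cliques are glued together like a tree: every component of G - S,
  for a maximal clique S, is attached to S at a single vertex, since two attachment points would
  close a cycle through an edge of S and enlarge S. Induction along this decomposition bounds the
  ratios of the edges outside a maximal clique K by (n - |K|)/2, so the hypothesis forces
  equality on K.

  If |K| \<ge> 4, two Hamiltonian cycles of K sharing an edge have equal weight, which gives
  w(ab) + w(cd) = w(ac) + w(bd), and skipping a vertex of a Hamiltonian cycle gives the triangle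
  inequality. Hence a(v) = w(vx) + w(vy) - w(xy) does not depend on x and y, is nonnegative,
  and w(uv) = (a(u) + a(v))/2.
\<close>

abbreviation adjacent :: "'a set set \<Rightarrow> 'a \<Rightarrow> 'a \<Rightarrow> bool" where
  "adjacent E \<equiv> \<lambda>a b. {a, b} \<in> E"

abbreviation induced_edges :: "'a set set \<Rightarrow> 'a set \<Rightarrow> 'a set set" where
  "induced_edges E A \<equiv> {e \<in> E. e \<subseteq> A}"

lemma symp_adjacent: "symp (adjacent E)"
  by (simp add: symp_def insert_commute)

lemma reachable_sym: "(adjacent E)\<^sup>*\<^sup>* x y \<Longrightarrow> (adjacent E)\<^sup>*\<^sup>* y x"
  by (rule sympD[OF symp_rtranclp[OF symp_adjacent]])

lemma reachable_induced_mono: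
  "(adjacent (induced_edges E A))\<^sup>*\<^sup>* x y \<Longrightarrow> A \<subseteq> B \<Longrightarrow> (adjacent (induced_edges E B))\<^sup>*\<^sup>* x y"
  by (erule rtranclp_mono[THEN predicate2D, rotated]) auto

fun is_walk :: "'a set set \<Rightarrow> 'a list \<Rightarrow> bool" where
  "is_walk E (x # y # xs) \<longleftrightarrow> {x, y} \<in> E \<and> is_walk E (y # xs)"
| "is_walk E _ \<longleftrightarrow> True"

fun walk_weight :: "('a set \<Rightarrow> real) \<Rightarrow> 'a list \<Rightarrow> real" where
  "walk_weight w (x # y # xs) = w {x, y} + walk_weight w (y # xs)"
| "walk_weight w _ = 0"

lemma is_walk_iff_nth: "is_walk E xs \<longleftrightarrow> (\<forall>i. Suc i < length xs \<longrightarrow> {xs ! i, xs ! Suc i} \<in> E)"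
proof (induction E xs rule: is_walk.induct)
  case (1 E x y xs)
  then show ?case by (auto simp: less_Suc_eq_0_disj)
qed auto

lemma walk_weight_eq_sum: "walk_weight w xs = (\<Sum>i<length xs - 1. w {xs ! i, xs ! Suc i})"
proof (induction w xs rule: walk_weight.induct)
  case (1 w x y xs)
  then show ?case by (simp add: sum.lessThan_Suc_shift del: sum.lessThan_Suc)
qed auto

lemma is_walk_append:
  "is_walk E (xs @ ys) \<longleftrightarrow> is_walk E xs \<and> is_walk E ys \<and> (xs \<noteq> [] \<and> ys \<noteq> [] \<longrightarrow> {last xs, hd ys} \<in> E)"
proof (induction xs rule: induct_list012)
  case (2 x)
  then show ?case by (cases ys) auto
qed auto

lemma is_walk_take: "is_walk E xs \<Longrightarrow> is_walk E (take n xs)"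
  by (simp add: is_walk_iff_nth)

lemma is_walk_drop: "is_walk E xs \<Longrightarrow> is_walk E (drop n xs)"
  by (simp add: is_walk_iff_nth add.commute)

lemma is_walk_induced_edges: "is_walk E xs \<Longrightarrow> set xs \<subseteq> A \<Longrightarrow> is_walk (induced_edges E A) xs"
  by (auto simp: is_walk_iff_nth)

lemma is_walk_mono: "is_walk E xs \<Longrightarrow> E \<subseteq> F \<Longrightarrow> is_walk F xs"
  by (auto simp: is_walk_iff_nth)

lemma is_walk_reachable:
  assumes "is_walk E xs" "x \<in> set xs" "y \<in> set xs"
  shows "(adjacent E)\<^sup>*\<^sup>* x y"
proof -
  have from_hd: "(adjacent E)\<^sup>*\<^sup>* (hd xs) z" if "is_walk E xs" "z \<in> set xs" for xs z
    using that
  proof (induction E xs rule: is_walk.induct)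
    case (1 E a b xs)
    then show ?case by (auto intro: converse_rtranclp_into_rtranclp)
  qed auto
  show ?thesis
    using from_hd[OF assms(1,2)] from_hd[OF assms(1,3)] by (blast intro: rtranclp_trans reachable_sym)
qed

lemma reachable_imp_distinct_walk:
  assumes "(adjacent (induced_edges E A))\<^sup>*\<^sup>* a b" "a \<in> A"
  obtains P where "P \<noteq> []" "hd P = a" "last P = b" "distinct P" "set P \<subseteq> A" "is_walk E P"
proof -
  have "\<exists>P. P \<noteq> [] \<and> hd P = a \<and> last P = b \<and> distinct P \<and> set P \<subseteq> A \<and> is_walk E P"
    using assms
  proof (induction rule: rtranclp_induct)
    case base
    then show ?case by (intro exI[of _ "[a]"]) auto
  next
    case (step b c)
    then obtain P where P: "P \<noteq> []" "hd P = a" "last P = b" "distinct P" "set P \<subseteq> A" "is_walk E P"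
      by auto
    show ?case
    proof (cases "c \<in> set P")
      case True
      then obtain k where k: "k < length P" "P ! k = c" by (auto simp: in_set_conv_nth)
      have "last (take (Suc k) P) = c" using k by (simp add: take_Suc_conv_app_nth)
      then show ?thesis using P is_walk_take[OF P(6)] set_take_subset[of "Suc k" P]
        by (intro exI[of _ "take (Suc k) P"]) auto
    next
      case False
      then show ?thesis using P step(2)
        by (intro exI[of _ "P @ [c]"]) (auto simp: is_walk_append)
    qed
  qed
  then show ?thesis using that by blast
qed

lemma cycle_edges_eq_image: "cycle_edges c = (\<lambda>i. {c ! i, c ! ((i + 1) mod length c)}) ` {..<length c}"
  unfolding cycle_edges_def by auto

lemma cycle_successor_less: "i < length c \<Longrightarrow> (i + 1) mod length c < length c"
  by (cases c) auto

lemma cycle_edge_nth_closed_walk: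
  assumes "i < length c"
  shows "{c ! i, c ! ((i + 1) mod length c)} = {(c @ [hd c]) ! i, (c @ [hd c]) ! Suc i}"
proof (cases "Suc i < length c")
  case True
  then show ?thesis by (simp add: nth_append)
next
  case False
  with assms have "Suc i = length c" "c \<noteq> []" by auto
  then show ?thesis by (simp add: nth_append hd_conv_nth)
qed

lemma cycle_edges_closed_walk:
  "cycle_edges c = (\<lambda>i. {(c @ [hd c]) ! i, (c @ [hd c]) ! Suc i}) ` {..<length c}"
  unfolding cycle_edges_eq_image using cycle_edge_nth_closed_walk[of _ c] by auto

lemma cycle_edges_subset_iff_walk:
  "cycle_edges c \<subseteq> E \<longleftrightarrow> is_walk E (c @ [hd c])"
  unfolding cycle_edges_closed_walk is_walk_iff_nth by auto

lemma nth_mem_cycle_edges: "Suc i < length c \<Longrightarrow> {c ! i, c ! Suc i} \<in> cycle_edges c"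
  unfolding cycle_edges_def by (rule CollectI, rule exI[of _ i]) simp

lemma cycle_edge_subset: "e \<in> cycle_edges c \<Longrightarrow> e \<subseteq> set c"
  unfolding cycle_edges_eq_image using cycle_successor_less by fastforce

lemma finite_cycle_edges: "finite (cycle_edges c)"
  unfolding cycle_edges_eq_image by simp

lemma cycle_edges_map: "cycle_edges (map f c) = (`) f ` cycle_edges c"
  unfolding cycle_edges_eq_image image_image length_map
  by (rule image_cong[OF refl]) (use cycle_successor_less in fastforce)

lemma inj_on_cycle_edge_index:
  assumes "distinct c" "length c \<ge> 3"
  shows "inj_on (\<lambda>i. {c ! i, c ! ((i + 1) mod length c)}) {..<length c}"
proof
  fix i j assume i: "i \<in> {..<length c}" and j: "j \<in> {..<length c}"
    and eq: "{c ! i, c ! ((i + 1) mod length c)} = {c ! j, c ! ((j + 1) mod length c)}"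
  let ?n = "length c"
  show "i = j"
  proof (rule ccontr)
    assume "i \<noteq> j"
    then have "c ! i = c ! ((j + 1) mod ?n)" "c ! j = c ! ((i + 1) mod ?n)"
      using eq i j assms(1) by (auto simp: doubleton_eq_iff nth_eq_iff_index_eq)
    then have "i = (j + 1) mod ?n" "j = (i + 1) mod ?n"
      using i j cycle_successor_less[of i c] cycle_successor_less[of j c] assms(1)
      by (auto simp: nth_eq_iff_index_eq)
    then have "i = (i + 2) mod ?n" by (simp add: mod_Suc_eq)
    moreover have "(i + 2) mod ?n \<noteq> i"
      using i assms(2) by (cases "i + 2 < ?n") (auto simp: le_mod_geq)
    ultimately show False by simp
  qed
qed

lemma cycle_edge_card_two:
  assumes "distinct c" "length c \<ge> 3" "e \<in> cycle_edges c"
  shows "card e = 2"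
proof -
  obtain i where e: "e = {c ! i, c ! ((i + 1) mod length c)}" and "i \<in> {..<length c}"
    using assms(3) unfolding cycle_edges_eq_image by (rule imageE)
  then have i: "i < length c" by simp
  have "(i + 1) mod length c \<noteq> i"
  proof (cases "i + 1 < length c")
    case False
    then have "i + 1 = length c" using i by simp
    moreover have "i \<noteq> 0" using assms(2) calculation by linarith
    ultimately show ?thesis by simp
  qed simp
  then have "c ! i \<noteq> c ! ((i + 1) mod length c)"
    using assms(1) i cycle_successor_less[OF i] by (simp add: nth_eq_iff_index_eq)
  then show ?thesis using e by simp
qed

lemma card_cycle_edges:
  "distinct c \<Longrightarrow> length c \<ge> 3 \<Longrightarrow> card (cycle_edges c) = length c"
  unfolding cycle_edges_eq_image using card_image[OF inj_on_cycle_edge_index] by simp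

lemma cycle_weight_eq_walk_weight:
  assumes "distinct c" "length c \<ge> 3"
  shows "cycle_weight w c = walk_weight w (c @ [hd c])"
proof -
  have "cycle_weight w c = (\<Sum>i<length c. w {c ! i, c ! ((i + 1) mod length c)})"
    unfolding cycle_weight_def cycle_edges_eq_image
    using sum.reindex[OF inj_on_cycle_edge_index[OF assms]] by simp
  also have "\<dots> = (\<Sum>i<length c. w {(c @ [hd c]) ! i, (c @ [hd c]) ! Suc i})"
    using cycle_edge_nth_closed_walk[of _ c] by auto
  finally show ?thesis by (simp add: walk_weight_eq_sum)
qed

lemma simple_graph_edgeE:
  assumes "simple_graph V E" "e \<in> E"
  obtains x y where "e = {x, y}" "x \<noteq> y" "x \<in> V" "y \<in> V"
  using assms unfolding simple_graph_def by blast

lemma simple_graph_edge_vertices: "simple_graph V E \<Longrightarrow> {a, b} \<in> E \<Longrightarrow> a \<in> V \<and> b \<in> V"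
  by (auto elim: simple_graph_edgeE simp: doubleton_eq_iff)

lemma simple_graph_finite_edges:
  assumes "simple_graph V E"
  shows "finite E"
proof -
  have "E \<subseteq> Pow V" "finite V" using assms unfolding simple_graph_def by auto
  then show ?thesis by (simp add: finite_subset)
qed

lemma cycle_closed_walk_twice:
  assumes "c \<noteq> []"
  shows "is_walk (cycle_edges c) (c @ c)"
proof -
  have "is_walk (cycle_edges c) (c @ [hd c])"
    using cycle_edges_subset_iff_walk by blast
  then show ?thesis using assms by (auto simp: is_walk_append)
qed

lemma cycle_connected_no_cut:
  assumes "is_cycle V E c"
  shows "connected_no_cut (set c) (cycle_edges c)"
proof -
  have c: "c \<noteq> []" "distinct c" "length c \<ge> 3" using assms unfolding is_cycle_def by auto
  have walk: "is_walk (cycle_edges c) (c @ c)" using cycle_closed_walk_twice[OF c(1)] .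
  have "graph_connected (set c) (cycle_edges c)"
    unfolding graph_connected_def using c(1) is_walk_reachable[OF walk] by auto
  moreover have "\<not> cut_vertex (set c) (cycle_edges c) v" for v
  proof
    assume cut: "cut_vertex (set c) (cycle_edges c) v"
    then obtain k where k: "k < length c" "c ! k = v"
      unfolding cut_vertex_def by (auto simp: in_set_conv_nth)
    \<comment> \<open>going once around the cycle from the successor of v to its predecessor\<close>
    define Q where "Q = drop (Suc k) (take (k + length c) (c @ c))"
    have Q_eq: "Q = drop (Suc k) c @ take k c" unfolding Q_def using k by simp
    have split: "c = take k c @ v # drop (Suc k) c" using k id_take_nth_drop by fastforce
    have "v \<notin> set (take k c)" "v \<notin> set (drop (Suc k) c)"
      using c(2) k by (auto simp: in_set_conv_nth nth_eq_iff_index_eq)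
    moreover have "set c = insert v (set (take k c) \<union> set (drop (Suc k) c))"
      by (subst (1) split) simp
    ultimately have set_Q: "set Q = set c - {v}" unfolding Q_eq by auto
    have "is_walk (cycle_edges c) Q" unfolding Q_def using walk by (intro is_walk_drop is_walk_take)
    then have "is_walk (induced_edges (cycle_edges c) (set Q)) Q" by (rule is_walk_induced_edges) simp
    then have walk_Q: "is_walk {e \<in> cycle_edges c. v \<notin> e} Q" by (rule is_walk_mono) (auto simp: set_Q)
    obtain x y where "x \<in> set Q" "y \<in> set Q" "\<not> (adjacent {e \<in> cycle_edges c. v \<notin> e})\<^sup>*\<^sup>* x y"
      using cut unfolding cut_vertex_def set_Q by auto
    then show False using is_walk_reachable[OF walk_Q] by blast
  qed
  ultimately show ?thesis unfolding connected_no_cut_def by auto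
qed

lemma clique_connected_no_cut:
  assumes "is_clique Q E" "Q \<noteq> {}"
  shows "connected_no_cut Q (induced_edges E Q)"
proof -
  have "(adjacent (induced_edges E Q))\<^sup>*\<^sup>* x y" if "x \<in> Q" "y \<in> Q" for x y
    using assms(1) that unfolding is_clique_def by (cases "x = y") auto
  then have "graph_connected Q (induced_edges E Q)"
    unfolding graph_connected_def using assms(2) by blast
  moreover have "(adjacent {e \<in> induced_edges E Q. v \<notin> e})\<^sup>*\<^sup>* x y"
    if "x \<in> Q" "y \<in> Q" "x \<noteq> v" "y \<noteq> v" for x y v
    using assms(1) that unfolding is_clique_def by (cases "x = y") auto
  then have "\<not> cut_vertex Q (induced_edges E Q) v" for v
    unfolding cut_vertex_def by blast
  ultimately show ?thesis unfolding connected_no_cut_def by auto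
qed

lemma clique_cycle:
  assumes "S \<subseteq> V" "is_clique S E" "card S \<ge> 3" "distinct p" "set p = S"
  shows "is_cycle V E p"
proof -
  have len: "length p = card S" using distinct_card[OF assms(4)] assms(5) by simp
  have "e \<in> E" if "e \<in> cycle_edges p" for e
  proof -
    have "card e = 2" using cycle_edge_card_two[OF assms(4) _ that] len assms(3) by simp
    then obtain x y where "e = {x, y}" "x \<noteq> y" by (meson card_2_iff)
    moreover have "e \<subseteq> S" using cycle_edge_subset[OF that] assms(5) by simp
    ultimately show ?thesis using assms(2) unfolding is_clique_def by blast
  qed
  then show ?thesis unfolding is_cycle_def using len assms by auto
qed

section \<open>Cliques and cycles in block graphs\<close>

lemma subgraph_in_block:
  assumes "simple_graph V E" "subgraph VH EH V E" "connected_no_cut VH EH"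
  obtains VB EB where "is_block V E VB EB" "VH \<subseteq> VB" "EH \<subseteq> EB"
proof -
  define Cs where "Cs = {(A, F). subgraph A F V E \<and> connected_no_cut A F \<and> VH \<subseteq> A \<and> EH \<subseteq> F}"
  define size :: "'a set \<times> 'a set set \<Rightarrow> nat" where "size = (\<lambda>(A, F). card A + card F)"
  have fin: "finite V" "finite E"
    using assms(1) simple_graph_finite_edges unfolding simple_graph_def by auto
  have "Cs \<subseteq> Pow V \<times> Pow E" unfolding Cs_def subgraph_def by auto
  then have "finite Cs" using fin by (meson finite_Pow_iff finite_SigmaI finite_subset)
  moreover have "(VH, EH) \<in> Cs" using assms unfolding Cs_def by auto
  ultimately obtain A F where AF: "(A, F) \<in> Cs" "size (A, F) = Max (size ` Cs)"
    using Max_in[of "size ` Cs"] by fastforce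
  have "is_block V E A F"
    unfolding is_block_def
  proof (intro conjI allI impI)
    fix A' F' assume A'F': "subgraph A' F' V E \<and> connected_no_cut A' F' \<and> A \<subseteq> A' \<and> F \<subseteq> F'"
    then have "(A', F') \<in> Cs" using AF(1) unfolding Cs_def by auto
    then have "size (A', F') \<le> size (A, F)"
      unfolding AF(2) by (rule Max_ge[OF finite_imageI[OF \<open>finite Cs\<close>] imageI])
    moreover have "finite A'" "finite F'"
      using A'F' fin unfolding subgraph_def by (auto intro: finite_subset)
    moreover from this have "card A \<le> card A'" "card F \<le> card F'" using A'F' by (auto intro: card_mono)
    ultimately have "card A' = card A" "card F' = card F" unfolding size_def by auto
    then show "A' = A" "F' = F"
      using A'F' card_subset_eq[OF \<open>finite A'\<close>, of A] card_subset_eq[OF \<open>finite F'\<close>, of F] by auto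
  qed (use AF(1) Cs_def in auto)
  then show ?thesis using AF(1) that unfolding Cs_def by auto
qed

lemma block_graph_cycle_clique:
  assumes "block_graph V E" "is_cycle V E c"
  shows "is_clique (set c) E"
proof -
  have sg: "simple_graph V E" using assms(1) unfolding block_graph_def by simp
  have "set c \<subseteq> V" "cycle_edges c \<subseteq> E" using assms(2) unfolding is_cycle_def by simp_all
  then have "subgraph (set c) (cycle_edges c) V E"
    using cycle_edge_subset unfolding subgraph_def by blast
  then obtain VB EB where B: "is_block V E VB EB" "set c \<subseteq> VB"
    using subgraph_in_block[OF sg _ cycle_connected_no_cut[OF assms(2)]] by metis
  then have "is_clique VB EB" using assms(1) unfolding block_graph_def by simp
  moreover have "EB \<subseteq> E" using B(1) unfolding is_block_def subgraph_def by simp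
  ultimately show ?thesis using B(2) unfolding is_clique_def by blast
qed

lemma block_graph_square_chord:
  assumes "block_graph V E" "distinct [a, b, c, d]" "{a, b, c, d} \<subseteq> V"
    and "{a, b} \<in> E" "{b, c} \<in> E" "{c, d} \<in> E" "{d, a} \<in> E"
  shows "{a, c} \<in> E"
proof -
  have "cycle_edges [a, b, c, d] \<subseteq> E" using assms(4-) by (simp add: cycle_edges_subset_iff_walk)
  then have "is_cycle V E [a, b, c, d]" using assms(2,3) unfolding is_cycle_def by auto
  then have "is_clique (set [a, b, c, d]) E" by (rule block_graph_cycle_clique[OF assms(1)])
  moreover have "a \<in> set [a, b, c, d]" "c \<in> set [a, b, c, d]" "a \<noteq> c" using assms(2) by auto
  ultimately show ?thesis unfolding is_clique_def by blast
qed

definition maximal_clique :: "'a set \<Rightarrow> 'a set set \<Rightarrow> 'a set \<Rightarrow> bool" where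
  "maximal_clique V E S \<longleftrightarrow> is_clique S E \<and> S \<subseteq> V \<and> (\<forall>Q. S \<subseteq> Q \<and> Q \<subseteq> V \<and> is_clique Q E \<longrightarrow> Q = S)"

lemma maximal_clique_exists:
  assumes "finite V" "T \<subseteq> V" "is_clique T E"
  obtains S where "maximal_clique V E S" "T \<subseteq> S"
proof -
  define Cs where "Cs = {Q. Q \<subseteq> V \<and> is_clique Q E}"
  have "finite Cs" using assms(1) unfolding Cs_def by simp
  moreover have "T \<in> Cs" using assms(2,3) unfolding Cs_def by simp
  ultimately obtain S where "S \<in> Cs" "T \<subseteq> S \<and> (\<forall>Q \<in> Cs. S \<subseteq> Q \<longrightarrow> Q = S)"
    using finite_has_maximal2 by metis
  then have "maximal_clique V E S" "T \<subseteq> S" unfolding maximal_clique_def Cs_def by auto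
  then show ?thesis by (rule that)
qed

lemma block_clique_maximal_clique:
  assumes "is_block V E VK EK" "is_clique VK EK" "VK \<noteq> {}"
  shows "maximal_clique V E VK"
  unfolding maximal_clique_def
proof (intro conjI allI impI)
  have "subgraph VK EK V E" using assms(1) unfolding is_block_def by auto
  then show "VK \<subseteq> V" and clique: "is_clique VK E"
    using assms(2) unfolding subgraph_def is_clique_def by auto
  fix Q assume Q: "VK \<subseteq> Q \<and> Q \<subseteq> V \<and> is_clique Q E"
  have "subgraph Q (induced_edges E Q) V E" using Q unfolding subgraph_def by auto
  moreover have "connected_no_cut Q (induced_edges E Q)"
    using clique_connected_no_cut Q assms(3) by blast
  moreover have "EK \<subseteq> induced_edges E Q" using \<open>subgraph VK EK V E\<close> Q unfolding subgraph_def by blast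
  moreover have "\<forall>VH EH. subgraph VH EH V E \<and> connected_no_cut VH EH \<and> VK \<subseteq> VH \<and> EK \<subseteq> EH
      \<longrightarrow> VH = VK \<and> EH = EK"
    using assms(1) unfolding is_block_def by blast
  ultimately show "Q = VK" using Q by blast
qed

lemma maximal_cliqueD:
  "maximal_clique V E S \<Longrightarrow> S \<subseteq> Q \<Longrightarrow> Q \<subseteq> V \<Longrightarrow> is_clique Q E \<Longrightarrow> Q = S"
  unfolding maximal_clique_def by blast

lemma block_graph_clique_extension:
  assumes bg: "block_graph V E" and "S \<subseteq> V" "is_clique S E" "a \<in> V - S"
    and "x \<in> S" "y \<in> S" "x \<noteq> y" "{a, x} \<in> E" "{a, y} \<in> E"
  shows "is_clique (insert a S) E"
proof -
  have a_adj: "{a, s} \<in> E" if "s \<in> S" for s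
  proof (cases "s = x \<or> s = y")
    case True
    then show ?thesis using assms(8,9) by auto
  next
    case False
    then have "{x, s} \<in> E" "{s, y} \<in> E" using assms(3,5,6) that unfolding is_clique_def by auto
    moreover have "distinct [a, x, s, y]" using False assms(4-7) that by auto
    moreover have "{a, x, s, y} \<subseteq> V" using assms(2,4-6) that by auto
    ultimately show ?thesis
      using block_graph_square_chord[OF bg, of a x s y] assms(8,9) by (simp add: insert_commute)
  qed
  moreover have "{s, a} \<in> E" if "s \<in> S" for s using a_adj[OF that] by (simp add: insert_commute)
  ultimately show ?thesis using assms(3) unfolding is_clique_def by blast
qed

lemma maximal_clique_attachment:
  assumes bg: "block_graph V E" and S: "maximal_clique V E S"
    and "x \<in> S" "y \<in> S" "a \<in> V - S" "b \<in> V - S" "{a, x} \<in> E" "{b, y} \<in> E"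
    and "(adjacent (induced_edges E (V - S)))\<^sup>*\<^sup>* a b"
  shows "x = y"
proof (rule ccontr)
  assume "x \<noteq> y"
  have SV: "S \<subseteq> V" and clique_S: "is_clique S E" using S unfolding maximal_clique_def by auto
  obtain P where P: "P \<noteq> []" "hd P = a" "last P = b" "distinct P" "set P \<subseteq> V - S" "is_walk E P"
    by (rule reachable_imp_distinct_walk[OF assms(9,5)])
  \<comment> \<open>the path from a to b closes up to a cycle through the edge xy of S\<close>
  define c where "c = x # P @ [y]"
  have "{y, x} \<in> E" using clique_S assms(3,4) \<open>x \<noteq> y\<close> unfolding is_clique_def by auto
  then have "is_walk E (P @ [y, x])" using P(1,3,6) assms(8) by (simp add: is_walk_append)
  moreover have "{x, a} \<in> E" using assms(7) by (simp add: insert_commute)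
  ultimately have "is_walk E (x # P @ [y, x])" using P(1,2) by (cases P) auto
  then have "is_walk E (c @ [hd c])" unfolding c_def by simp
  moreover have "distinct c" "length c \<ge> 3" "set c \<subseteq> V"
    using P(1,4,5) assms(3,4) \<open>x \<noteq> y\<close> SV unfolding c_def by (auto simp: Suc_le_eq)
  ultimately have "is_cycle V E c" unfolding is_cycle_def by (simp add: cycle_edges_subset_iff_walk)
  then have clique_c: "is_clique (set c) E" by (rule block_graph_cycle_clique[OF bg])
  moreover have "a \<in> set c" using P(1,2) unfolding c_def by (cases P) auto
  moreover have "y \<in> set c" "a \<noteq> y" using assms(4,5) unfolding c_def by auto
  ultimately have "{a, y} \<in> E" using clique_c unfolding is_clique_def by blast
  then have "is_clique (insert a S) E"
    using block_graph_clique_extension[OF bg SV clique_S assms(5,3,4) \<open>x \<noteq> y\<close> assms(7)] by blast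
  then have "insert a S = S" using maximal_cliqueD[OF S] SV assms(5) by blast
  then show False using assms(5) by auto
qed

lemma edge_maximal_clique_not_on_cycle:
  assumes "block_graph V E" "maximal_clique V E {z, u}" "z \<noteq> u"
  shows "\<not> (\<exists>c. is_cycle V E c \<and> {z, u} \<in> cycle_edges c)"
proof
  assume "\<exists>c. is_cycle V E c \<and> {z, u} \<in> cycle_edges c"
  then obtain c where c: "is_cycle V E c" "{z, u} \<in> cycle_edges c" by blast
  have "set c \<subseteq> V" using c(1) unfolding is_cycle_def by simp
  moreover have "is_clique (set c) E" using block_graph_cycle_clique[OF assms(1) c(1)] .
  moreover have "{z, u} \<subseteq> set c" using cycle_edge_subset[OF c(2)] .
  ultimately have "set c = {z, u}" using maximal_cliqueD[OF assms(2)] by blast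
  moreover have "card (set c) \<ge> 3" using c(1) unfolding is_cycle_def by (simp add: distinct_card)
  ultimately show False using assms(3) by simp
qed

lemma reachable_leaves_set:
  assumes "(adjacent (induced_edges E U))\<^sup>*\<^sup>* a s" "a \<notin> S" "s \<in> S"
  obtains u z where "u \<in> U - S" "z \<in> S" "{u, z} \<in> E"
  using assms
proof (induction arbitrary: thesis rule: converse_rtranclp_induct)
  case (step a a')
  then show ?case by (cases "a' \<in> S") auto
qed simp

section \<open>Summing over the maximal cliques of a block graph\<close>

definition component :: "'a set set \<Rightarrow> 'a set \<Rightarrow> 'a \<Rightarrow> 'a set" where
  "component E A u = {t. (adjacent (induced_edges E A))\<^sup>*\<^sup>* u t}"

lemma component_self: "u \<in> component E A u"
  unfolding component_def by simp

lemma component_closed: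
  "t \<in> component E A u \<Longrightarrow> {t, b} \<in> E \<Longrightarrow> t \<in> A \<Longrightarrow> b \<in> A \<Longrightarrow> b \<in> component E A u"
  unfolding component_def by (simp add: rtranclp.rtrancl_into_rtrancl)

lemma component_reachable:
  assumes "t \<in> component E A u"
  shows "(adjacent (induced_edges E (component E A u)))\<^sup>*\<^sup>* u t"
  using assms unfolding component_def mem_Collect_eq
proof (induction rule: rtranclp_induct)
  case (step t t')
  then show ?case by (auto intro: rtranclp.rtrancl_into_rtrancl)
qed simp

lemma component_subset: "u \<in> A \<Longrightarrow> component E A u \<subseteq> A"
  unfolding component_def by (auto elim: rtranclp.cases)

lemma component_subset_closed:
  assumes "u \<in> U \<inter> A" "\<And>a b. a \<in> U \<inter> A \<Longrightarrow> {a, b} \<in> E \<Longrightarrow> b \<in> U"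
  shows "component E A u \<subseteq> U \<inter> A"
proof
  fix t assume "t \<in> component E A u"
  then show "t \<in> U \<inter> A"
    unfolding component_def mem_Collect_eq
  proof (induction rule: rtranclp_induct)
    case (step t t')
    then show ?case using assms(2) by auto
  qed (use assms(1) in simp)
qed

lemma component_neighbour:
  assumes bg: "block_graph V E" and S: "maximal_clique V E S"
    and "z \<in> S" "u \<in> V - S" "{u, z} \<in> E"
    and t: "t \<in> component E (V - S) u" and tb: "{t, b} \<in> E"
  shows "b \<in> component E (V - S) u \<or> b = z"
proof (cases "b \<in> S")
  case True
  have "t \<in> V - S" using component_subset[OF assms(4)] t by blast
  then have "z = b"
    using maximal_clique_attachment[OF bg S \<open>z \<in> S\<close> True \<open>u \<in> V - S\<close> _ _ tb] assms(5) t
    unfolding component_def by (simp add: insert_commute)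
  then show ?thesis by simp
next
  case False
  have "simple_graph V E" using bg unfolding block_graph_def by simp
  then have "b \<in> V" using simple_graph_edge_vertices[OF _ tb] by blast
  moreover have "t \<in> V - S" using component_subset[OF assms(4)] t by blast
  ultimately show ?thesis using component_closed[OF t tb] False by simp
qed

definition rooted_region :: "'a set \<Rightarrow> 'a set set \<Rightarrow> 'a set \<Rightarrow> 'a set \<Rightarrow> bool" where
  "rooted_region V E S U \<longleftrightarrow> U \<subseteq> V \<and> maximal_clique V E S \<and> S \<subseteq> U \<and>
     (\<forall>a\<in>U. \<exists>s\<in>S. (adjacent (induced_edges E U))\<^sup>*\<^sup>* a s) \<and>
     (\<forall>a\<in>U - S. \<forall>b. {a, b} \<in> E \<longrightarrow> b \<in> U)"

text \<open>
  Splitting a region U rooted at S along an edge uz leaving S: the component D of u in G - S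
  hangs off S at z alone, so U splits into D + z, rooted at the maximal clique B through uz,
  and U - D, still rooted at S.
\<close>

locale rooted_region_split =
  fixes V :: "'a set" and E :: "'a set set" and S U B :: "'a set" and u z :: 'a
  assumes block_graph: "block_graph V E"
    and region: "rooted_region V E S U"
    and u: "u \<in> U - S" and z: "z \<in> S" and uz: "{u, z} \<in> E"
    and B: "maximal_clique V E B" "{z, u} \<subseteq> B"
begin

abbreviation D :: "'a set" where
  "D \<equiv> component E (V - S) u"

lemma U_subset: "U \<subseteq> V" and S_subset: "S \<subseteq> U" and S_maximal: "maximal_clique V E S"
  and U_closed: "\<And>a b. a \<in> U - S \<Longrightarrow> {a, b} \<in> E \<Longrightarrow> b \<in> U"
  using region unfolding rooted_region_def by blast+

lemma D_subset: "D \<subseteq> U - S"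
proof -
  have "D \<subseteq> U \<inter> (V - S)"
    using u U_subset U_closed by (intro component_subset_closed) auto
  then show ?thesis by blast
qed

lemma D_neighbour: "t \<in> D \<Longrightarrow> {t, b} \<in> E \<Longrightarrow> b \<in> D \<or> b = z"
  using component_neighbour[OF block_graph S_maximal z _ uz] u U_subset by blast

lemma B_subset: "B \<subseteq> insert z D"
proof
  fix t assume "t \<in> B"
  show "t \<in> insert z D"
  proof (cases "t = z \<or> t = u")
    case True
    then show ?thesis using component_self[of u E "V - S"] by auto
  next
    case False
    then have "{u, t} \<in> E" using B \<open>t \<in> B\<close> unfolding maximal_clique_def is_clique_def by auto
    then show ?thesis using D_neighbour[OF component_self] by auto
  qed
qed

lemma rooted_region_component: "rooted_region V E B (insert z D)"
  unfolding rooted_region_def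
proof (intro conjI ballI allI impI)
  show "insert z D \<subseteq> V" using z D_subset S_subset U_subset by blast
  show "maximal_clique V E B" using B(1) .
  show "B \<subseteq> insert z D" using B_subset .
  fix a assume a: "a \<in> insert z D"
  show "\<exists>s\<in>B. (adjacent (induced_edges E (insert z D)))\<^sup>*\<^sup>* a s"
  proof (cases "a = z")
    case False
    then have "(adjacent (induced_edges E D))\<^sup>*\<^sup>* u a" using a component_reachable by auto
    then have "(adjacent (induced_edges E (insert z D)))\<^sup>*\<^sup>* u a"
      by (rule reachable_induced_mono) blast
    then have "(adjacent (induced_edges E (insert z D)))\<^sup>*\<^sup>* a u" by (rule reachable_sym)
    then show ?thesis using B(2) by auto
  qed (use B(2) in auto)
next
  fix a b assume "a \<in> insert z D - B" "{a, b} \<in> E"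
  then show "b \<in> insert z D" using D_neighbour B(2) by auto
qed

lemma reachable_avoiding_D:
  assumes "(adjacent (induced_edges E U))\<^sup>*\<^sup>* a s" "s \<in> S" "a \<notin> D"
  shows "\<exists>s'\<in>S. (adjacent (induced_edges E (U - D)))\<^sup>*\<^sup>* a s'"
  using assms
proof (induction rule: converse_rtranclp_induct)
  case (step a a')
  show ?case
  proof (cases "a \<in> S")
    case False
    have "a' \<notin> D"
    proof
      assume "a' \<in> D"
      moreover have "{a', a} \<in> E" using step(1) by (simp add: insert_commute)
      ultimately show False using D_neighbour step(5) False z by auto
    qed
    then obtain s' where "s' \<in> S" "(adjacent (induced_edges E (U - D)))\<^sup>*\<^sup>* a' s'"
      using step by auto
    moreover have "adjacent (induced_edges E (U - D)) a a'" using step(1,5) \<open>a' \<notin> D\<close> by auto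
    ultimately show ?thesis by (auto intro: converse_rtranclp_into_rtranclp)
  qed auto
qed auto

lemma rooted_region_remainder: "rooted_region V E S (U - D)"
  unfolding rooted_region_def
proof (intro conjI ballI allI impI)
  show "U - D \<subseteq> V" using U_subset by blast
  show "maximal_clique V E S" using S_maximal .
  show "S \<subseteq> U - D" using S_subset D_subset by blast
  fix a assume "a \<in> U - D"
  then obtain s where "s \<in> S" "(adjacent (induced_edges E U))\<^sup>*\<^sup>* a s"
    using region unfolding rooted_region_def by blast
  then show "\<exists>s\<in>S. (adjacent (induced_edges E (U - D)))\<^sup>*\<^sup>* a s"
    using reachable_avoiding_D \<open>a \<in> U - D\<close> by blast
next
  fix a b assume a: "a \<in> U - D - S" and "{a, b} \<in> E"
  moreover have "b \<notin> D"
  proof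
    assume "b \<in> D"
    moreover have "{b, a} \<in> E" using \<open>{a, b} \<in> E\<close> by (simp add: insert_commute)
    ultimately show False using D_neighbour a z by auto
  qed
  ultimately show "b \<in> U - D" using U_closed by blast
qed

lemma edge_two_elements:
  assumes "e \<in> E"
  obtains p q where "e = {p, q}" "p \<noteq> q"
  using assms block_graph unfolding block_graph_def by (auto elim: simple_graph_edgeE)

lemma edges_split:
  "{e \<in> induced_edges E U. \<not> e \<subseteq> S} =
     induced_edges E B \<union> {e \<in> induced_edges E (insert z D). \<not> e \<subseteq> B} \<union>
     {e \<in> induced_edges E (U - D). \<not> e \<subseteq> S}"
proof (intro equalityI subsetI)
  fix e assume e: "e \<in> {e \<in> induced_edges E U. \<not> e \<subseteq> S}"
  then obtain p q where pq: "e = {p, q}" "p \<noteq> q" using edge_two_elements by blast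
  show "e \<in> induced_edges E B \<union> {e \<in> induced_edges E (insert z D). \<not> e \<subseteq> B} \<union>
      {e \<in> induced_edges E (U - D). \<not> e \<subseteq> S}"
  proof (cases "p \<in> D \<or> q \<in> D")
    case True
    have "{p, q} \<in> E" "{q, p} \<in> E" using e pq by (auto simp: insert_commute)
    then have "e \<subseteq> insert z D" using True D_neighbour pq(1) by blast
    then show ?thesis using e by blast
  next
    case False
    then show ?thesis using e pq by blast
  qed
next
  fix e assume e: "e \<in> induced_edges E B \<union> {e \<in> induced_edges E (insert z D). \<not> e \<subseteq> B} \<union>
      {e \<in> induced_edges E (U - D). \<not> e \<subseteq> S}"
  then obtain p q where pq: "e = {p, q}" "p \<noteq> q" using edge_two_elements by blast
  show "e \<in> {e \<in> induced_edges E U. \<not> e \<subseteq> S}"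
  proof (cases "e \<subseteq> insert z D")
    case True
    then have "p \<in> D \<or> q \<in> D" using pq by auto
    then have "\<not> e \<subseteq> S" using pq(1) D_subset by blast
    moreover have "e \<subseteq> U" using True z S_subset D_subset by blast
    moreover have "e \<in> E" using e by blast
    ultimately show ?thesis by blast
  next
    case False
    then have "e \<in> {e \<in> induced_edges E (U - D). \<not> e \<subseteq> S}" using e B_subset by blast
    then show ?thesis by blast
  qed
qed

lemma edges_split_disjoint:
  "induced_edges E B \<inter> {e \<in> induced_edges E (insert z D). \<not> e \<subseteq> B} = {}"
  "(induced_edges E B \<union> {e \<in> induced_edges E (insert z D). \<not> e \<subseteq> B}) \<inter>
     {e \<in> induced_edges E (U - D). \<not> e \<subseteq> S} = {}"
proof -
  show "induced_edges E B \<inter> {e \<in> induced_edges E (insert z D). \<not> e \<subseteq> B} = {}" by blast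
  have "e \<notin> induced_edges E (insert z D) \<inter> induced_edges E (U - D)" for e
  proof
    assume "e \<in> induced_edges E (insert z D) \<inter> induced_edges E (U - D)"
    moreover from this obtain p q where "e = {p, q}" "p \<noteq> q" using edge_two_elements by blast
    ultimately show False by blast
  qed
  then show "(induced_edges E B \<union> {e \<in> induced_edges E (insert z D). \<not> e \<subseteq> B}) \<inter>
      {e \<in> induced_edges E (U - D). \<not> e \<subseteq> S} = {}"
    using B_subset by blast
qed

lemma finite_U: "finite U"
  using U_subset block_graph finite_subset unfolding block_graph_def simple_graph_def by blast

lemma card_B: "card B \<ge> 2"
proof -
  have "B \<subseteq> V" using B(1) unfolding maximal_clique_def by simp
  moreover have "finite V" using block_graph unfolding block_graph_def simple_graph_def by simp
  ultimately have "card {z, u} \<le> card B" using B(2) by (intro card_mono) (auto intro: finite_subset)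
  moreover have "z \<noteq> u" using u z by blast
  ultimately show ?thesis by simp
qed

lemma card_split: "card (insert z D) + card (U - D) = card U + 1"
proof -
  have "z \<notin> D" using D_subset z by blast
  moreover have "D \<subseteq> U" using D_subset by blast
  ultimately show ?thesis
    using finite_U card_Diff_subset[of D U] card_mono[of U D] finite_subset[of D U] by simp
qed

lemma card_decrease: "card (insert z D - B) < card (U - S)" "card (U - D - S) < card (U - S)"
proof -
  have finite_D: "finite D" using D_subset finite_U finite_subset by blast
  have u_D: "u \<in> D" by (rule component_self)
  have "card (insert z D - B) \<le> card (D - {u})"
    using B(2) finite_D by (intro card_mono) auto
  also have "\<dots> < card D" using finite_D u_D by (rule card_Diff1_less)
  also have "\<dots> \<le> card (U - S)" using D_subset finite_U by (intro card_mono) auto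
  finally show "card (insert z D - B) < card (U - S)" .
  have "card (U - D - S) \<le> card (U - S - {u})"
    using u_D finite_U by (intro card_mono) auto
  also have "\<dots> < card (U - S)" using finite_U u by (intro card_Diff1_less) auto
  finally show "card (U - D - S) < card (U - S)" .
qed

lemma sum_edges_split:
  "(\<Sum>e\<in>{e \<in> induced_edges E U. \<not> e \<subseteq> S}. g e) =
     (\<Sum>e\<in>induced_edges E B. g e) + (\<Sum>e\<in>{e \<in> induced_edges E (insert z D). \<not> e \<subseteq> B}. g e)
     + (\<Sum>e\<in>{e \<in> induced_edges E (U - D). \<not> e \<subseteq> S}. g e)"
proof -
  have "finite E" using block_graph simple_graph_finite_edges unfolding block_graph_def by blast
  then show ?thesis unfolding edges_split using edges_split_disjoint by (simp add: sum.union_disjoint)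
qed

end

lemma rooted_region_edge_sum_le:
  fixes g :: "'a set \<Rightarrow> real"
  assumes bg: "block_graph V E"
    and clique_bound: "\<And>B. maximal_clique V E B \<Longrightarrow> card B \<ge> 2 \<Longrightarrow>
      (\<Sum>e\<in>induced_edges E B. g e) \<le> (real (card B) - 1) / 2"
    and "rooted_region V E S U"
  shows "(\<Sum>e\<in>{e \<in> induced_edges E U. \<not> e \<subseteq> S}. g e) \<le> (real (card U) - real (card S)) / 2"
  using assms(3)
proof (induction "card (U - S)" arbitrary: U S rule: less_induct)
  case less
  have U: "U \<subseteq> V" "S \<subseteq> U" using less.prems unfolding rooted_region_def by auto
  show ?case
  proof (cases "U = S")
    case True
    then show ?thesis by simp
  next
    case False
    then obtain a where a: "a \<in> U - S" using U by blast
    then obtain s where s: "s \<in> S" "(adjacent (induced_edges E U))\<^sup>*\<^sup>* a s"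
      using less.prems unfolding rooted_region_def by blast
    have "a \<notin> S" using a by blast
    then obtain u z where leaving: "u \<in> U - S" "z \<in> S" "{u, z} \<in> E"
      by (rule reachable_leaves_set[OF s(2) _ s(1)])
    have "is_clique {z, u} E" using leaving(3) unfolding is_clique_def by (auto simp: insert_commute)
    moreover have "finite V" "{z, u} \<subseteq> V"
      using bg leaving U unfolding block_graph_def simple_graph_def by auto
    ultimately obtain B where B: "maximal_clique V E B" "{z, u} \<subseteq> B"
      using maximal_clique_exists by blast
    interpret rooted_region_split V E S U B u z
      using bg less.prems leaving B by unfold_locales
    have "(\<Sum>e\<in>{e \<in> induced_edges E (insert z D). \<not> e \<subseteq> B}. g e)
        \<le> (real (card (insert z D)) - real (card B)) / 2"
      using less.hyps[OF card_decrease(1) rooted_region_component] .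
    moreover have "(\<Sum>e\<in>{e \<in> induced_edges E (U - D). \<not> e \<subseteq> S}. g e)
        \<le> (real (card (U - D)) - real (card S)) / 2"
      using less.hyps[OF card_decrease(2) rooted_region_remainder] .
    ultimately show ?thesis
      unfolding sum_edges_split using clique_bound[OF B(1) card_B] card_split by simp
  qed
qed

lemma block_graph_rooted_region:
  assumes "block_graph V E" "maximal_clique V E S" "S \<noteq> {}"
  shows "rooted_region V E S V"
proof -
  have simple: "simple_graph V E" and connected: "graph_connected V E"
    using assms(1) unfolding block_graph_def by simp_all
  have S_V: "S \<subseteq> V" using assms(2) unfolding maximal_clique_def by simp
  have "e \<subseteq> V" if "e \<in> E" for e using simple that by (auto elim: simple_graph_edgeE)
  then have induced_V: "induced_edges E V = E" by blast
  obtain s where "s \<in> S" using assms(3) by blast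
  then have "\<forall>a\<in>V. \<exists>s\<in>S. (adjacent (induced_edges E V))\<^sup>*\<^sup>* a s"
    using connected S_V unfolding induced_V graph_connected_def by blast
  moreover have "\<forall>a\<in>V - S. \<forall>b. {a, b} \<in> E \<longrightarrow> b \<in> V" using simple_graph_edge_vertices[OF simple] by blast
  ultimately show ?thesis unfolding rooted_region_def using assms(2) S_V by blast
qed

section \<open>Heaviest cycles\<close>

lemma cycle_weight_le_Cw:
  assumes "finite V" "is_cycle V E c" "e \<in> cycle_edges c"
  shows "cycle_weight w c \<le> Cw V E w e"
proof -
  have "{c. is_cycle V E c \<and> e \<in> cycle_edges c} \<subseteq> {xs. set xs \<subseteq> V \<and> distinct xs}"
    unfolding is_cycle_def by auto
  then have "finite {c. is_cycle V E c \<and> e \<in> cycle_edges c}"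
    using finite_subset_distinct[OF assms(1)] by (rule finite_subset)
  then show ?thesis unfolding Cw_def using assms(2,3) by auto
qed

lemma cycle_weight_pos:
  assumes "is_cycle V E c" "\<forall>e\<in>E. w e > 0"
  shows "cycle_weight w c > 0"
proof -
  have "{c ! 0, c ! Suc 0} \<in> cycle_edges c"
    using assms(1) unfolding is_cycle_def by (intro nth_mem_cycle_edges) simp
  moreover have "\<forall>e\<in>cycle_edges c. w e > 0" using assms unfolding is_cycle_def by auto
  ultimately show ?thesis unfolding cycle_weight_def using finite_cycle_edges
    by (intro sum_pos) auto
qed

lemma cycle_weight_shares_sum:
  assumes "is_cycle V E c" "\<forall>e\<in>E. w e > 0"
  shows "(\<Sum>e\<in>cycle_edges c. w e / cycle_weight w c) = 1"
  using cycle_weight_pos[OF assms] unfolding cycle_weight_def by (simp flip: sum_divide_distrib)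

lemma cycle_ratio_slack:
  assumes "finite V" "is_cycle V E c" "\<forall>e\<in>E. w e > 0" "e \<in> cycle_edges c"
  shows "w e / Cw V E w e \<le> w e / cycle_weight w c"
    and "w e / Cw V E w e = w e / cycle_weight w c \<Longrightarrow> Cw V E w e = cycle_weight w c"
proof -
  have "w e > 0" using assms unfolding is_cycle_def by auto
  moreover have "cycle_weight w c > 0" using cycle_weight_pos[OF assms(2,3)] .
  moreover have "cycle_weight w c \<le> Cw V E w e" using cycle_weight_le_Cw[OF assms(1,2,4)] .
  ultimately show "w e / Cw V E w e \<le> w e / cycle_weight w c"
    and "w e / Cw V E w e = w e / cycle_weight w c \<Longrightarrow> Cw V E w e = cycle_weight w c"
    by (auto intro: divide_left_mono simp: field_simps)
qed

lemma cycle_ratio_sum_le_1: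
  assumes "finite V" "is_cycle V E c" "\<forall>e\<in>E. w e > 0"
  shows "(\<Sum>e\<in>cycle_edges c. w e / Cw V E w e) \<le> 1"
proof -
  have "(\<Sum>e\<in>cycle_edges c. w e / Cw V E w e) \<le> (\<Sum>e\<in>cycle_edges c. w e / cycle_weight w c)"
    using cycle_ratio_slack(1)[OF assms] by (rule sum_mono)
  also have "\<dots> = 1" by (rule cycle_weight_shares_sum[OF assms(2,3)])
  finally show ?thesis .
qed

lemma cycle_ratio_sum_eq_1:
  assumes "finite V" "is_cycle V E c" "\<forall>e\<in>E. w e > 0"
    and "(\<Sum>e\<in>cycle_edges c. w e / Cw V E w e) = 1" "e \<in> cycle_edges c"
  shows "Cw V E w e = cycle_weight w c"
proof -
  have "(\<Sum>e\<in>cycle_edges c. w e / cycle_weight w c - w e / Cw V E w e) = 0"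
    using cycle_weight_shares_sum[OF assms(2,3)] assms(4) by (simp add: sum_subtractf)
  then have "\<forall>e\<in>cycle_edges c. w e / cycle_weight w c - w e / Cw V E w e = 0"
    using cycle_ratio_slack(1)[OF assms(1-3)] finite_cycle_edges
      by (subst (asm) sum_nonneg_eq_0_iff) auto
  then have "w e / Cw V E w e = w e / cycle_weight w c" using assms(5) by fastforce
  then show ?thesis by (rule cycle_ratio_slack(2)[OF assms(1-3,5)])
qed

section \<open>Averaging over Hamiltonian cycles\<close>

lemma permutation_cycle_edges_subset:
  assumes "p \<in> permutations_of_set S" "card S \<ge> 3"
  shows "cycle_edges p \<subseteq> {e. e \<subseteq> S \<and> card e = 2}"
proof -
  have "distinct p" "set p = S" "length p \<ge> 3"
    using assms length_finite_permutations_of_set[OF assms(1)] by (auto dest: permutations_of_setD)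
  then show ?thesis using cycle_edge_card_two cycle_edge_subset by blast
qed

lemma card_permutations_with_edge_le:
  assumes "u \<in> S" "v \<in> S" "u \<noteq> v" "u' \<in> S" "v' \<in> S" "u' \<noteq> v'"
  shows "card {p \<in> permutations_of_set S. {u, v} \<in> cycle_edges p}
       \<le> card {p \<in> permutations_of_set S. {u', v'} \<in> cycle_edges p}"
proof -
  \<comment> \<open>a permutation of S moving u to u' and v to v'\<close>
  define t where "t = transpose u u' v"
  define \<sigma> where "\<sigma> = transpose t v' \<circ> transpose u u'"
  have "t \<in> S" "t \<noteq> u'" unfolding t_def using assms by (auto simp: transpose_def)
  have "\<sigma> ` S = transpose t v' ` transpose u u' ` S" unfolding \<sigma>_def by (rule image_comp[symmetric])
  also have "\<dots> = S" using assms \<open>t \<in> S\<close> by simp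
  finally have \<sigma>: "\<sigma> u = u'" "\<sigma> v = v'" "inj \<sigma>" "\<sigma> ` S = S"
    unfolding \<sigma>_def using assms \<open>t \<noteq> u'\<close> by (simp_all add: t_def inj_compose inj_transpose)
  show ?thesis
  proof (rule card_inj_on_le)
    show "inj_on (map \<sigma>) {p \<in> permutations_of_set S. {u, v} \<in> cycle_edges p}"
      using inj_mapI[OF \<sigma>(3)] by (rule inj_on_subset) simp
    have "map \<sigma> p \<in> permutations_of_set S" if "p \<in> permutations_of_set S" for p
      using that \<sigma> inj_on_subset[OF \<sigma>(3) subset_UNIV]
        by (auto simp: permutations_of_set_def distinct_map)
    moreover have "{u', v'} \<in> cycle_edges (map \<sigma> p)" if "{u, v} \<in> cycle_edges p" for p
      unfolding cycle_edges_map by (rule image_eqI[of _ _ "{u, v}"]) (simp_all add: \<sigma>(1,2) that)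
    ultimately show "map \<sigma> ` {p \<in> permutations_of_set S. {u, v} \<in> cycle_edges p}
        \<subseteq> {p \<in> permutations_of_set S. {u', v'} \<in> cycle_edges p}" by blast
  qed simp
qed

lemma card_permutations_with_edge_eq:
  assumes "e \<subseteq> S" "card e = 2" "e' \<subseteq> S" "card e' = 2"
  shows "card {p \<in> permutations_of_set S. e \<in> cycle_edges p}
       = card {p \<in> permutations_of_set S. e' \<in> cycle_edges p}"
proof -
  obtain x y x' y' where "e = {x, y}" "x \<noteq> y" "e' = {x', y'}" "x' \<noteq> y'"
    using assms(2,4) by (auto simp: card_2_iff)
  then show ?thesis
    using assms(1,3) card_permutations_with_edge_le[of x S y x' y']
      card_permutations_with_edge_le[of x' S y' x y]
    by simp
qed

lemma card_two_subsets:
  assumes "finite S"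
  shows "2 * real (card {e. e \<subseteq> S \<and> card e = 2}) = real (card S) * (real (card S) - 1)"
proof -
  have "even (card S * (card S - 1))" by (cases "even (card S)") auto
  then have "2 * card {e. e \<subseteq> S \<and> card e = 2} = card S * (card S - 1)"
    unfolding n_subsets[OF assms] choose_two by simp
  then have "2 * real (card {e. e \<subseteq> S \<and> card e = 2}) = real (card S) * real (card S - 1)"
    by (simp flip: of_nat_mult)
  then show ?thesis by (cases "card S") auto
qed

lemma sum_cycle_edges_over_permutations:
  fixes f :: "'a set \<Rightarrow> real"
  assumes "card S \<ge> 3" "e0 \<subseteq> S" "card e0 = 2"
  shows "(\<Sum>p\<in>permutations_of_set S. \<Sum>e\<in>cycle_edges p. f e)
       = real (card {p \<in> permutations_of_set S. e0 \<in> cycle_edges p}) * (\<Sum>e | e \<subseteq> S \<and> card e = 2. f e)"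
proof -
  define P where "P = permutations_of_set S"
  define ES where "ES = {e. e \<subseteq> S \<and> card e = 2}"
  have fin: "finite P" "finite ES" unfolding P_def ES_def using assms(1) card.infinite by fastforce+
  have "(\<Sum>p\<in>P. \<Sum>e\<in>cycle_edges p. f e) = (\<Sum>p\<in>P. \<Sum>e\<in>{e. e \<in> ES \<and> e \<in> cycle_edges p}. f e)"
    using permutation_cycle_edges_subset[OF _ assms(1)] unfolding P_def ES_def
    by (intro sum.cong refl arg_cong[where f = "sum f"]) blast
  also have "\<dots> = (\<Sum>e\<in>ES. \<Sum>p\<in>{p. p \<in> P \<and> e \<in> cycle_edges p}. f e)"
    by (rule sum.swap_restrict[OF fin])
  also have "\<dots> = (\<Sum>e\<in>ES. real (card {p \<in> P. e0 \<in> cycle_edges p}) * f e)"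
    using card_permutations_with_edge_eq[OF _ _ assms(2,3)] unfolding P_def ES_def by simp
  finally show ?thesis unfolding P_def ES_def by (simp add: sum_distrib_left)
qed

lemma sum_pairs_average_over_permutations:
  fixes h :: "'a set \<Rightarrow> real"
  assumes "finite S" "card S \<ge> 3"
  shows "2 * real (card (permutations_of_set S)) * (\<Sum>e | e \<subseteq> S \<and> card e = 2. h e)
       = (real (card S) - 1) * (\<Sum>p\<in>permutations_of_set S. \<Sum>e\<in>cycle_edges p. h e)"
proof -
  define P where "P = permutations_of_set S"
  define ES where "ES = {e. e \<subseteq> S \<and> card e = 2}"
  obtain e0 where e0: "e0 \<subseteq> S" "card e0 = 2"
    using obtain_subset_with_card_n[of 2 S] assms(2) by force
  define N where "N = real (card {p \<in> P. e0 \<in> cycle_edges p})"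
  have sum_P: "(\<Sum>p\<in>P. \<Sum>e\<in>cycle_edges p. f e) = N * sum f ES" for f :: "'a set \<Rightarrow> real"
    unfolding P_def ES_def N_def by (rule sum_cycle_edges_over_permutations[OF assms(2) e0])
  have "card (cycle_edges p) = card S" if "p \<in> P" for p
    using that card_cycle_edges[of p] length_finite_permutations_of_set[of p S] assms(2)
    unfolding P_def by (simp add: permutations_of_set_def)
  then have "real (card P) * real (card S) = (\<Sum>p\<in>P. \<Sum>e\<in>cycle_edges p. 1)" by simp
  also have "\<dots> = N * real (card ES)" using sum_P[of "\<lambda>_. 1"] by simp
  finally have count: "real (card P) * real (card S) = N * real (card ES)" .
  have "real (card S) * (2 * real (card P)) = 2 * (real (card P) * real (card S))" by simp
  also have "\<dots> = N * (2 * real (card ES))" unfolding count by simp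
  also have "\<dots> = real (card S) * (N * (real (card S) - 1))"
    using card_two_subsets[OF assms(1)] unfolding ES_def by simp
  finally have "2 * real (card P) = N * (real (card S) - 1)"
    using assms(2) by simp
  then have "2 * real (card P) * sum h ES = N * (real (card S) - 1) * sum h ES" by simp
  also have "\<dots> = (real (card S) - 1) * (\<Sum>p\<in>P. \<Sum>e\<in>cycle_edges p. h e)"
    by (simp add: sum_P mult_ac)
  finally show ?thesis unfolding P_def ES_def .
qed

definition hamiltonian_cycles_heaviest :: "'a set \<Rightarrow> 'a set set \<Rightarrow> ('a set \<Rightarrow> real) \<Rightarrow> 'a set \<Rightarrow> bool" where
  "hamiltonian_cycles_heaviest V E w S \<longleftrightarrow>
     (\<forall>p\<in>permutations_of_set S. \<forall>e\<in>cycle_edges p. Cw V E w e = cycle_weight w p)"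

lemma clique_induced_edges:
  assumes "simple_graph V E" "is_clique S E"
  shows "induced_edges E S = {e. e \<subseteq> S \<and> card e = 2}"
proof (intro equalityI subsetI)
  fix e assume "e \<in> induced_edges E S"
  then show "e \<in> {e. e \<subseteq> S \<and> card e = 2}" using assms(1) by (auto elim: simple_graph_edgeE)
next
  fix e assume "e \<in> {e. e \<subseteq> S \<and> card e = 2}"
  then show "e \<in> induced_edges E S" using assms(2) unfolding is_clique_def by (auto simp: card_2_iff)
qed

context
  fixes V :: "'a set" and E :: "'a set set" and w :: "'a set \<Rightarrow> real" and S :: "'a set"
  assumes simple: "simple_graph V E" and w_pos: "\<forall>e\<in>E. w e > 0"
    and clique: "S \<subseteq> V" "is_clique S E" "card S \<ge> 3"
begin

lemma finite_clique: "finite S"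
  using simple clique(1) finite_subset unfolding simple_graph_def by blast

lemma permutation_is_cycle: "p \<in> permutations_of_set S \<Longrightarrow> is_cycle V E p"
  using clique_cycle[OF clique] by (auto dest: permutations_of_setD)

lemma clique_ratio_average:
  "2 * real (card (permutations_of_set S)) * (\<Sum>e\<in>induced_edges E S. w e / Cw V E w e)
     = (real (card S) - 1) * (\<Sum>p\<in>permutations_of_set S. \<Sum>e\<in>cycle_edges p. w e / Cw V E w e)"
  unfolding clique_induced_edges[OF simple clique(2)]
  by (rule sum_pairs_average_over_permutations[OF finite_clique clique(3)])

lemma permutations_ratio_sum_le:
  "(\<Sum>p\<in>permutations_of_set S. \<Sum>e\<in>cycle_edges p. w e / Cw V E w e) \<le> real (card (permutations_of_set S))"
proof -
  have "finite V" using simple unfolding simple_graph_def by simp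
  then have "(\<Sum>p\<in>permutations_of_set S. \<Sum>e\<in>cycle_edges p. w e / Cw V E w e)
      \<le> (\<Sum>p\<in>permutations_of_set S. 1)"
    by (intro sum_mono cycle_ratio_sum_le_1 permutation_is_cycle w_pos)
  then show ?thesis by simp
qed

lemma clique_ratio_sum_le: "(\<Sum>e\<in>induced_edges E S. w e / Cw V E w e) \<le> (real (card S) - 1) / 2"
proof -
  let ?n = "real (card (permutations_of_set S))"
  have "?n * (2 * (\<Sum>e\<in>induced_edges E S. w e / Cw V E w e)) \<le> ?n * (real (card S) - 1)"
    using clique_ratio_average clique(3)
      mult_left_mono[OF permutations_ratio_sum_le, of "real (card S) - 1"]
    by (simp add: algebra_simps)
  moreover have "?n > 0" using finite_clique by simp
  ultimately show ?thesis by simp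
qed

lemma clique_ratio_sum_tight:
  assumes "(\<Sum>e\<in>induced_edges E S. w e / Cw V E w e) \<ge> (real (card S) - 1) / 2"
  shows "hamiltonian_cycles_heaviest V E w S"
proof -
  let ?P = "permutations_of_set S" and ?T = "\<lambda>p. \<Sum>e\<in>cycle_edges p. w e / Cw V E w e"
  have fin: "finite V" using simple unfolding simple_graph_def by simp
  have "(real (card S) - 1) * real (card ?P) \<le> (real (card S) - 1) * (\<Sum>p\<in>?P. ?T p)"
    using clique_ratio_average mult_left_mono[OF assms, of "2 * real (card ?P)"]
      by (simp add: mult.commute)
  then have "(\<Sum>p\<in>?P. 1 - ?T p) \<le> 0"
    using clique(3) by (simp add: sum_subtractf)
  moreover have "\<forall>p\<in>?P. 1 - ?T p \<ge> 0"
    using cycle_ratio_sum_le_1[OF fin permutation_is_cycle w_pos] by simp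
  ultimately have "\<forall>p\<in>?P. ?T p = 1"
    using sum_nonneg_eq_0_iff[of ?P "\<lambda>p. 1 - ?T p"] sum_nonneg[of ?P "\<lambda>p. 1 - ?T p"] by simp
  then show ?thesis
    unfolding hamiltonian_cycles_heaviest_def
      using cycle_ratio_sum_eq_1[OF fin permutation_is_cycle w_pos] by blast
qed

end

lemma maximal_clique_ratio_sum_le:
  assumes bg: "block_graph V E" and w_pos: "\<forall>e\<in>E. w e > 0"
    and B: "maximal_clique V E B" "card B \<ge> 2"
  shows "(\<Sum>e\<in>induced_edges E B. w e / Cw V E w e) \<le> (real (card B) - 1) / 2"
proof -
  have simple: "simple_graph V E" using bg unfolding block_graph_def by simp
  have clique: "B \<subseteq> V" "is_clique B E" using B(1) unfolding maximal_clique_def by auto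
  show ?thesis
  proof (cases "card B \<ge> 3")
    case True
    then show ?thesis by (rule clique_ratio_sum_le[OF simple w_pos clique])
  next
    case False
    then have "card B = 2" using B(2) by simp
    then obtain z u where zu: "B = {z, u}" "z \<noteq> u" by (auto simp: card_2_iff)
    have "induced_edges E B = {B}"
      unfolding clique_induced_edges[OF simple clique(2)] using zu \<open>card B = 2\<close>
      by (auto simp: card_2_iff)
    moreover have "B \<in> E" using calculation by blast
    moreover have "\<not> (\<exists>c. is_cycle V E c \<and> B \<in> cycle_edges c)"
      using edge_maximal_clique_not_on_cycle[OF bg B(1)[unfolded zu] zu(2)] zu(1) by simp
    then have "Cw V E w B = 2 * w B" unfolding Cw_def by (rule if_not_P)
    ultimately show ?thesis using w_pos \<open>card B = 2\<close> by simp
  qed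
qed

section \<open>Vertex-induced weights\<close>

lemma heaviest_four_point:
  assumes "hamiltonian_cycles_heaviest V E w S" "finite S" "distinct [a, b, c, d]" "{a, b, c, d} \<subseteq> S"
  shows "w {a, b} + w {c, d} = w {a, c} + w {b, d}"
proof -
  obtain R where R: "distinct R" "set R = S - {a, b, c, d}"
    using finite_distinct_list[of "S - {a, b, c, d}"] assms(2) by blast
  define p where "p = a # b # c # d # R"
  define q where "q = a # c # b # d # R"
  have perms: "p \<in> permutations_of_set S" "q \<in> permutations_of_set S"
    using assms(3,4) R unfolding p_def q_def permutations_of_set_def by auto
  have "{b, c} \<in> cycle_edges p" "{b, c} \<in> cycle_edges q"
    using nth_mem_cycle_edges[of 1 p] nth_mem_cycle_edges[of 1 q]
    unfolding p_def q_def by (simp_all add: insert_commute)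
  then have "cycle_weight w p = cycle_weight w q"
    using assms(1) perms unfolding hamiltonian_cycles_heaviest_def by metis
  moreover have "distinct p" "distinct q" using perms by (auto dest: permutations_of_setD)
  ultimately show ?thesis
    by (simp add: cycle_weight_eq_walk_weight p_def q_def insert_commute)
qed

lemma heaviest_triangle:
  assumes "hamiltonian_cycles_heaviest V E w S" "finite V" "S \<subseteq> V" "is_clique S E" "card S \<ge> 4"
    and "distinct [x, v, y]" "{x, v, y} \<subseteq> S"
  shows "w {x, y} \<le> w {x, v} + w {v, y}"
proof -
  have "finite S" using assms(2,3) finite_subset by blast
  obtain R where R: "distinct R" "set R = S - {x, v, y}"
    using finite_distinct_list[of "S - {x, v, y}"] \<open>finite S\<close> by blast
  have "card (S - {x, v, y}) \<ge> 1"
    using assms(5-7) \<open>finite S\<close> by (simp add: card_Diff_subset)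
  then have "S - {x, v, y} \<noteq> {}" by (metis card.empty not_one_le_zero)
  then obtain r R' where rR: "R = r # R'" using R(2) by (cases R) auto
  \<comment> \<open>the Hamiltonian cycle of S through xvy, and the cycle obtained by skipping v\<close>
  define p where "p = x # v # y # R"
  define q where "q = x # y # R"
  have p: "p \<in> permutations_of_set S" using assms(6,7) R unfolding p_def permutations_of_set_def by auto
  have q: "distinct q" "set q = S - {v}" using assms(6,7) R unfolding q_def by auto
  have "is_cycle V E q"
    using assms(3-7) \<open>finite S\<close> q by (intro clique_cycle[of "S - {v}"]) (auto simp: is_clique_def)
  moreover have "{y, r} \<in> cycle_edges p" "{y, r} \<in> cycle_edges q"
    using nth_mem_cycle_edges[of 2 p] nth_mem_cycle_edges[of 1 q]
    unfolding p_def q_def rR by (simp_all add: numeral_2_eq_2)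
  ultimately have "cycle_weight w q \<le> cycle_weight w p"
    using cycle_weight_le_Cw[OF assms(2)] assms(1) p unfolding hamiltonian_cycles_heaviest_def by metis
  moreover have "distinct p" using p by (auto dest: permutations_of_setD)
  ultimately show ?thesis using q(1)
    by (simp add: cycle_weight_eq_walk_weight p_def q_def rR)
qed

definition triangle_excess :: "('a set \<Rightarrow> real) \<Rightarrow> 'a \<Rightarrow> 'a \<Rightarrow> 'a \<Rightarrow> real" where
  "triangle_excess w v x y = w {v, x} + w {v, y} - w {x, y}"

lemma triangle_excess_swap: "triangle_excess w v x y = triangle_excess w v y x"
  unfolding triangle_excess_def by (simp add: insert_commute)

lemma four_point_triangle_excess_eq:
  assumes four_point: "\<And>a b c d. distinct [a, b, c, d] \<Longrightarrow> {a, b, c, d} \<subseteq> S \<Longrightarrow>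
      w {a, b} + w {c, d} = w {a, c} + w {b, d}"
    and "distinct [v, x, y]" "distinct [v, x', y']" "{v, x, y, x', y'} \<subseteq> S"
  shows "triangle_excess w v x y = triangle_excess w v x' y'"
proof -
  have change: "triangle_excess w v x y = triangle_excess w v x y'"
    if "distinct [v, x, y]" "distinct [v, x, y']" "{v, x, y, y'} \<subseteq> S" for x y y'
  proof (cases "y = y'")
    case False
    have "distinct [v, y, y', x]" "{v, y, y', x} \<subseteq> S" using that False by auto
    then have "w {v, y} + w {y', x} = w {v, y'} + w {y, x}" by (rule four_point)
    then show ?thesis unfolding triangle_excess_def by (simp add: insert_commute)
  qed simp
  show ?thesis
  proof (cases "x' = x")
    case True
    show ?thesis unfolding True by (rule change) (use assms(2-4) True in auto)
  next
    case False
    have "triangle_excess w v x y = triangle_excess w v x x'"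
      by (rule change) (use assms(2-4) False in auto)
    also have "\<dots> = triangle_excess w v x' x" by (rule triangle_excess_swap)
    also have "\<dots> = triangle_excess w v x' y'" by (rule change) (use assms(2-4) False in auto)
    finally show ?thesis .
  qed
qed

lemma two_other_elements:
  assumes "finite S" "card S \<ge> 3" "v \<in> S"
  obtains x y where "x \<in> S" "y \<in> S" "distinct [v, x, y]"
proof -
  have "card (S - {v}) \<ge> 2" using assms by simp
  then obtain T where "T \<subseteq> S - {v}" "card T = 2" by (meson obtain_subset_with_card_n)
  moreover from this obtain x y where "T = {x, y}" "x \<noteq> y" by (meson card_2_iff)
  ultimately show ?thesis using that by auto
qed

lemma four_point_vertex_induced:
  fixes w :: "'a set \<Rightarrow> real"
  assumes "finite S" "card S \<ge> 3"
    and four_point: "\<And>a b c d. distinct [a, b, c, d] \<Longrightarrow> {a, b, c, d} \<subseteq> S \<Longrightarrow>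
      w {a, b} + w {c, d} = w {a, c} + w {b, d}"
    and triangle: "\<And>x v y. distinct [x, v, y] \<Longrightarrow> {x, v, y} \<subseteq> S \<Longrightarrow> w {x, y} \<le> w {x, v} + w {v, y}"
  obtains a where "\<forall>v\<in>S. a v \<ge> 0" "\<forall>u\<in>S. \<forall>v\<in>S. u \<noteq> v \<longrightarrow> w {u, v} = (a u + a v) / 2"
proof -
  have triangle_at: "\<exists>x\<in>S. \<exists>y\<in>S. distinct [v, x, y]" if "v \<in> S" for v
    using two_other_elements[OF assms(1,2) that] by blast
  define a where "a v = (SOME r. \<exists>x\<in>S. \<exists>y\<in>S. distinct [v, x, y] \<and> r = triangle_excess w v x y)" for v
  have a: "a v = triangle_excess w v x y" if "v \<in> S" "x \<in> S" "y \<in> S" "distinct [v, x, y]" for v x y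
  proof -
    have "\<exists>x\<in>S. \<exists>y\<in>S. distinct [v, x, y] \<and> a v = triangle_excess w v x y"
      unfolding a_def by (rule someI_ex) (use triangle_at[OF that(1)] in blast)
    then obtain x' y' where "x' \<in> S" "y' \<in> S" "distinct [v, x', y']" "a v = triangle_excess w v x' y'"
      by blast
    then show ?thesis
      using four_point_triangle_excess_eq[where S = S and w = w, OF four_point, of v x' y' x y] that
        by simp
  qed
  show ?thesis
  proof (rule that)
    show "\<forall>v\<in>S. a v \<ge> 0"
    proof
      fix v assume "v \<in> S"
      then obtain x y where "x \<in> S" "y \<in> S" "distinct [v, x, y]" using triangle_at by blast
      moreover have "w {x, y} \<le> w {x, v} + w {v, y}"
        using triangle[of x v y] calculation \<open>v \<in> S\<close> by auto
      moreover have "{x, v} = {v, x}" by blast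
      ultimately show "a v \<ge> 0" using a[OF \<open>v \<in> S\<close>] unfolding triangle_excess_def by simp
    qed
    show "\<forall>u\<in>S. \<forall>v\<in>S. u \<noteq> v \<longrightarrow> w {u, v} = (a u + a v) / 2"
    proof (intro ballI impI)
      fix u v assume uv: "u \<in> S" "v \<in> S" "u \<noteq> v"
      then have "card (S - {u, v}) \<ge> 1" using assms(1,2) by (simp add: card_Diff_subset)
      then have "S - {u, v} \<noteq> {}" by (metis card.empty not_one_le_zero)
      then obtain x where "x \<in> S" "x \<noteq> u" "x \<noteq> v" by blast
      then show "w {u, v} = (a u + a v) / 2"
        using a[of u v x] a[of v u x] uv unfolding triangle_excess_def by (simp add: insert_commute)
    qed
  qed
qed

lemma heaviest_clique_vertex_induced:
  assumes "hamiltonian_cycles_heaviest V E w S" "finite V" "S \<subseteq> V" "is_clique S E" "card S \<ge> 4"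
  obtains a where "\<forall>v\<in>S. a v \<ge> 0" "\<forall>u\<in>S. \<forall>v\<in>S. u \<noteq> v \<longrightarrow> w {u, v} = (a u + a v) / 2"
proof (rule four_point_vertex_induced[of S w])
  show "finite S" using assms(2,3) finite_subset by blast
  show "card S \<ge> 3" using assms(5) by simp
  show "w {a, b} + w {c, d} = w {a, c} + w {b, d}"
    if "distinct [a, b, c, d]" "{a, b, c, d} \<subseteq> S" for a b c d
    using heaviest_four_point[OF assms(1) \<open>finite S\<close> that] .
  show "w {x, y} \<le> w {x, v} + w {v, y}" if "distinct [x, v, y]" "{x, v, y} \<subseteq> S" for x v y
    using heaviest_triangle[OF assms that] .
qed (use that in blast)

lemma block_graph_ratio_sum_extremal:
  assumes bg: "block_graph V E" and w_pos: "\<forall>e\<in>E. w e > 0"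
    and total: "(\<Sum>e\<in>E. w e / Cw V E w e) = (real (card V) - 1) / 2"
    and K: "maximal_clique V E K" "K \<noteq> {}"
  shows "(\<Sum>e\<in>induced_edges E K. w e / Cw V E w e) \<ge> (real (card K) - 1) / 2"
proof -
  have simple: "simple_graph V E" using bg unfolding block_graph_def by simp
  have "e \<subseteq> V" if "e \<in> E" for e using simple that by (auto elim: simple_graph_edgeE)
  then have "{e \<in> induced_edges E V. \<not> e \<subseteq> K} = E - induced_edges E K" by blast
  then have "(\<Sum>e\<in>E - induced_edges E K. w e / Cw V E w e) \<le> (real (card V) - real (card K)) / 2"
    using rooted_region_edge_sum_le[OF bg maximal_clique_ratio_sum_le[OF bg w_pos]
        block_graph_rooted_region[OF bg K]] by simp
  moreover have "(\<Sum>e\<in>E. w e / Cw V E w e)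
      = (\<Sum>e\<in>E - induced_edges E K. w e / Cw V E w e) + (\<Sum>e\<in>induced_edges E K. w e / Cw V E w e)"
    using simple_graph_finite_edges[OF simple] by (intro sum.subset_diff) auto
  ultimately show ?thesis using total by argo
qed

theorem corollary3p10:
  fixes V :: "'a set" and E :: "'a set set" and w :: "'a set \<Rightarrow> real"
  assumes "block_graph V E"
    and "\<forall>e\<in>E. w e > 0"
    and "(\<Sum>e\<in>E. w e / Cw V E w e) = (real (card V) - 1) / 2"
  shows "\<forall>VK EK. is_block V E VK EK \<and> is_clique VK EK \<and> card VK \<ge> 4 \<longrightarrow>
           (\<exists>a :: 'a \<Rightarrow> real. (\<forall>v\<in>VK. a v \<ge> 0) \<and>
              (\<forall>u\<in>VK. \<forall>v\<in>VK. {u, v} \<in> EK \<longrightarrow> w {u, v} = (a u + a v) / 2))"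
proof (intro allI impI)
  fix VK EK assume K: "is_block V E VK EK \<and> is_clique VK EK \<and> card VK \<ge> 4"
  have simple: "simple_graph V E" using assms(1) unfolding block_graph_def by simp
  have "VK \<noteq> {}" using K by auto
  then have max: "maximal_clique V E VK" using block_clique_maximal_clique K by blast
  then have VK: "VK \<subseteq> V" "is_clique VK E" "card VK \<ge> 3" using K unfolding maximal_clique_def by auto
  have "hamiltonian_cycles_heaviest V E w VK"
    using clique_ratio_sum_tight[OF simple assms(2) VK]
      block_graph_ratio_sum_extremal[OF assms max \<open>VK \<noteq> {}\<close>] .
  moreover have "finite V" using simple unfolding simple_graph_def by simp
  ultimately obtain a where a: "\<forall>v\<in>VK. a v \<ge> 0" "\<forall>u\<in>VK. \<forall>v\<in>VK. u \<noteq> v \<longrightarrow> w {u, v} = (a u + a v) / 2"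
    using heaviest_clique_vertex_induced VK(1,2) K by blast
  moreover have "u \<noteq> v" if "{u, v} \<in> EK" for u v
    using that K simple unfolding is_block_def subgraph_def by (auto elim: simple_graph_edgeE)
  ultimately show "\<exists>a :: 'a \<Rightarrow> real. (\<forall>v\<in>VK. a v \<ge> 0) \<and>
      (\<forall>u\<in>VK. \<forall>v\<in>VK. {u, v} \<in> EK \<longrightarrow> w {u, v} = (a u + a v) / 2)"
    by blast
qed

end
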